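(* Let $$\Omega=\{(\chi,\zeta,\xi):\ 0.454<\chi\le 0.45537,\ 0\le\zeta\le \tfrac12-\chi,\ 0\le\xi\le 1-2\chi-2\zeta\},$$ let $$f(\chi,\zeta)=\frac{3^{\frac12-4\chi+2\zeta}(1-2\chi-2\zeta)^{1-2\chi-2\zeta}(1-2\chi+4\zeta)^{1-2\chi+4\zeta}(6\chi-\frac32+3\zeta)^{6\chi-\frac32+3\zeta}(6\chi-\frac32-9\zeta)^{6\chi-\frac32-9\zeta}}{(2\chi+\zeta-\frac12)^{2\chi+\zeta-\frac12}\,2^{1-2\chi+\zeta}\,(\frac12-\chi-\zeta)^{\frac12-\chi-\zeta}\,(\frac12-\chi+2\zeta)^{\frac12-\chi+2\zeta}\,(2\chi-3\zeta-\frac12)^{2\chi-3\zeta-\frac12}},$$ $$g(\chi,\zeta,\xi)=\frac{2^{2\xi}\,(1/1.618)^{\xi}}{\xi^{\xi}\,(1-2\chi-2\zeta-\xi)^{1-2\chi-2\zeta-\xi}\,(1-2\chi+4\zeta-\xi)^{1-2\chi+4\zeta-\xi}\,(-\frac72+10\chi-5\zeta+\xi)^{-\frac72+10\chi-5\zeta+\xi}},$$ and $h=f\cdot g$ (with the convention $0^0=1$). Then, uniformly over positive even integers $n$ and integers $x$ with $0.454n<x\le 0.45537n$, $$\frac{q(x,n)}{(3n-1)!!}=O(n^6)\cdot\sup\{h(\chi,\zeta,\xi)^n:(\chi,\zeta,\xi)\in\Omega\},$$ where $q(x,n)$ is the quantity below.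
   Context: $q(x,n):=\sum_{i=0}^{\frac n2-x}\binom{n}{\frac n2-i}\frac{(\frac n2-i)!\,3^{n-2x-2i}}{(2x+i-\frac n2)!\,2^{\frac n2-x-i}(\frac n2-x-i)!}\cdot\frac{(\frac n2+i)!\,3^{n-2x+4i}}{(2x-3i-\frac n2)!\,2^{\frac n2-x+2i}(\frac n2-x+2i)!}\cdot\sum_{j=0}^{n-2i-2x}\binom{n-2i-2x}{j}\binom{n-2x+4i}{j}2^{2j}j!\left(\frac1{1.618}\right)^j\frac{(3(2x-\frac n2-3i))!\,(3(2x-\frac n2+i))!}{(3(2x-\frac n2-3i)-2(n-2i-2x)+j)!}$. Here $(3n-1)!!=(3n-1)(3n-3)\cdots 1$. *)

theory Defs
  imports "HOL-Analysis.Analysis"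
begin

fun dfact :: "nat \<Rightarrow> nat" where
  "dfact 0 = 1"
| "dfact (Suc 0) = 1"
| "dfact (Suc (Suc k)) = Suc (Suc k) * dfact k"

definition xlx :: "real \<Rightarrow> real" where
  "xlx t = (if t = 0 then 1 else t powr t)"

(* q(x,n); here m = n/2 (n even).  All factorial arguments are nonnegative
   in the range 0.454 n < x <= 0.45537 n, so natural-number subtraction
   agrees with integer subtraction there. *)
definition q :: "nat \<Rightarrow> nat \<Rightarrow> real" where
  "q x n = (let m = n div 2 in
     \<Sum>i = 0..m - x.
       real (n choose (m - i)) * fact (m - i) * 3 ^ (n - 2*x - 2*i)
         / (fact (2*x + i - m) * 2 ^ (m - x - i) * fact (m - x - i))
       * (fact (m + i) * 3 ^ (n - 2*x + 4*i)
         / (fact (2*x - 3*i - m) * 2 ^ (m - x + 2*i) * fact (m - x + 2*i)))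
       * (\<Sum>j = 0..n - 2*i - 2*x.
           real ((n - 2*i - 2*x) choose j) * real ((n - 2*x + 4*i) choose j)
           * 2 ^ (2*j) * fact j * (1 / 1.618) ^ j
           * fact (3 * (2*x - m - 3*i)) * fact (3 * (2*x - m + i))
           / fact (3 * (2*x - m - 3*i) - 2 * (n - 2*i - 2*x) + j)))"

definition Omega :: "(real \<times> real \<times> real) set" where
  "Omega = {(c, z, w). 0.454 < c \<and> c \<le> 0.45537 \<and> 0 \<le> z \<and> z \<le> 1/2 - c
                       \<and> 0 \<le> w \<and> w \<le> 1 - 2*c - 2*z}"

definition f_fun :: "real \<Rightarrow> real \<Rightarrow> real" where
  "f_fun c z =
     3 powr (1/2 - 4*c + 2*z) * xlx (1 - 2*c - 2*z) * xlx (1 - 2*c + 4*z)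
       * xlx (6*c - 3/2 + 3*z) * xlx (6*c - 3/2 - 9*z)
     / (xlx (2*c + z - 1/2) * 2 powr (1 - 2*c + z) * xlx (1/2 - c - z)
        * xlx (1/2 - c + 2*z) * xlx (2*c - 3*z - 1/2))"

definition g_fun :: "real \<Rightarrow> real \<Rightarrow> real \<Rightarrow> real" where
  "g_fun c z w =
     2 powr (2*w) * (1 / 1.618) powr w
     / (xlx w * xlx (1 - 2*c - 2*z - w) * xlx (1 - 2*c + 4*z - w)
        * xlx (-7/2 + 10*c - 5*z + w))"

definition h_fun :: "real \<times> real \<times> real \<Rightarrow> real" where
  "h_fun p = (case p of (c, z, w) \<Rightarrow> f_fun c z * g_fun c z w)"

end

theory Submission
  imports Defs
begin

(*
  Each summand of q(x,n)/(3n-1)!! is a quotient of two products of factorials times powers of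
  2, 3 and 1/1.618; here (3n-1)!! = (3n)!/(2^(3n/2) (3n/2)!).  The factorial arguments in the
  numerator and in the denominator have the same total, so the Stirling-type bounds
  k^k e^-k \<le> k! \<le> e sqrt(k+1) k^k e^-k make the exponentials cancel, at the cost of a factor
  O(n^3) from the six square roots of the numerator.  All factorial arguments are n times linear
  forms in (x/n, i/n, j/n), so by homogeneity of t ln t the remaining powers k^k combine exactly
  into h(x/n, i/n, j/n)^n, and this grid point lies in Omega.  There are O(n^2) summands.
*)

section \<open>The exponent h in entropy form\<close>

definition xlnx :: "real \<Rightarrow> real" where
  "xlnx t = ln (xlx t)"

lemma xlx_pos: "xlx t > 0"
  by (simp add: xlx_def)

lemma xlx_eq_exp_xlnx: "xlx t = exp (xlnx t)"
  by (simp add: xlnx_def xlx_pos)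

lemma xlnx_eq_mult_ln: "t > 0 \<Longrightarrow> xlnx t = t * ln t"
  by (simp add: xlnx_def xlx_def ln_powr)

lemma xlnx_0 [simp]: "xlnx 0 = 0"
  by (simp add: xlnx_def xlx_def)

lemma xlnx_scale:
  assumes "N > 0" "t \<ge> 0"
  shows "xlnx (N * t) = N * t * ln N + N * xlnx t"
  using assms by (cases "t = 0") (auto simp: xlnx_eq_mult_ln ln_mult algebra_simps)

lemma xlx_of_nat: "xlx (real k) = real k ^ k"
  by (cases "k = 0") (auto simp: xlx_def powr_realpow)

lemma xlnx_ge_minus_one:
  assumes "t \<ge> 0"
  shows "xlnx t \<ge> -1"
proof (cases "t = 0")
  case False
  then have t: "t > 0" using assms by simp
  have "ln (1/t) \<le> 1/t - 1" by (rule ln_le_minus_one) (use t in simp)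
  then have "t * (- ln t) \<le> t * (1/t - 1)" using t by (intro mult_left_mono) (auto simp: ln_div)
  then show ?thesis using t by (simp add: xlnx_eq_mult_ln algebra_simps)
qed simp

lemma xlnx_le_3_ln_3:
  assumes "t \<ge> 0" "t \<le> 3"
  shows "xlnx t \<le> 3 * ln 3"
proof (cases "t = 0")
  case False
  then have t: "t > 0" using assms by simp
  have "t * ln t \<le> t * ln 3" using t assms by (intro mult_left_mono) auto
  also have "\<dots> \<le> 3 * ln 3" using assms by (intro mult_right_mono) auto
  finally show ?thesis using t by (simp add: xlnx_eq_mult_ln)
qed simp

lemma h_fun_pos: "h_fun p > 0"
  by (cases p) (simp add: h_fun_def f_fun_def g_fun_def xlx_pos)

lemma h_fun_eq_exp:
  "h_fun (c, z, w) = exp ((1/2 - 4*c + 2*z) * ln 3 + xlnx (1 - 2*c - 2*z) + xlnx (1 - 2*c + 4*z)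
    + xlnx (6*c - 3/2 + 3*z) + xlnx (6*c - 3/2 - 9*z)
    - (xlnx (2*c + z - 1/2) + (1 - 2*c + z) * ln 2 + xlnx (1/2 - c - z) + xlnx (1/2 - c + 2*z)
       + xlnx (2*c - 3*z - 1/2))
    + 2*w * ln 2 + w * ln (500/809)
    - (xlnx w + xlnx (1 - 2*c - 2*z - w) + xlnx (1 - 2*c + 4*z - w) + xlnx (-7/2 + 10*c - 5*z + w)))"
  unfolding h_fun_def f_fun_def g_fun_def
  by (simp add: xlx_eq_exp_xlnx powr_def exp_add[symmetric] exp_diff[symmetric] del: exp_add exp_diff)

lemma h_fun_le:
  assumes "p \<in> Omega"
  shows "h_fun p \<le> exp (2 * ln 2 + 27/2 * ln 3 + 8)"
proof -
  obtain c z w where p: "p = (c, z, w)" by (cases p)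
  have o: "0.454 < c" "c \<le> 0.45537" "0 \<le> z" "z \<le> 1/2 - c" "0 \<le> w" "w \<le> 1 - 2*c - 2*z"
    using assms p by (auto simp: Omega_def)
  have "(1/2 - 4*c + 2*z) * ln 3 \<le> 3/2 * ln 3" "0 \<le> (1 - 2*c + z) * ln 2"
    "2*w * ln 2 \<le> 2 * ln 2" "w * ln (500/809) \<le> 0"
    using o by (auto intro: mult_right_mono mult_nonneg_nonneg mult_nonneg_nonpos)
  moreover have "xlnx (1 - 2*c - 2*z) \<le> 3 * ln 3" "xlnx (1 - 2*c + 4*z) \<le> 3 * ln 3"
    "xlnx (6*c - 3/2 + 3*z) \<le> 3 * ln 3" "xlnx (6*c - 3/2 - 9*z) \<le> 3 * ln 3"
    using o by (auto intro: xlnx_le_3_ln_3)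
  moreover have "xlnx (2*c + z - 1/2) \<ge> -1" "xlnx (1/2 - c - z) \<ge> -1"
    "xlnx (1/2 - c + 2*z) \<ge> -1" "xlnx (2*c - 3*z - 1/2) \<ge> -1" "xlnx w \<ge> -1"
    "xlnx (1 - 2*c - 2*z - w) \<ge> -1" "xlnx (1 - 2*c + 4*z - w) \<ge> -1"
    "xlnx (-7/2 + 10*c - 5*z + w) \<ge> -1"
    using o by (auto intro: xlnx_ge_minus_one)
  ultimately show ?thesis
    unfolding p h_fun_eq_exp exp_le_cancel_iff by linarith
qed

lemma bdd_above_h_fun_power: "bdd_above ((\<lambda>p. h_fun p ^ n) ` Omega)"
proof (rule bdd_aboveI2)
  fix p
  assume "p \<in> Omega"
  then show "h_fun p ^ n \<le> exp (2 * ln 2 + 27/2 * ln 3 + 8) ^ n"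
    using h_fun_le h_fun_pos[of p] by (intro power_mono) (auto intro: less_imp_le)
qed

lemma SUP_h_fun_power_nonneg: "0 \<le> (SUP p\<in>Omega. h_fun p ^ n)"
proof -
  have "(0.455, 0, 0) \<in> Omega" by (simp add: Omega_def)
  then show ?thesis
    using cSUP_upper[OF _ bdd_above_h_fun_power] h_fun_pos[of "(0.455, 0, 0)"]
    by (meson less_imp_le order_trans zero_le_power)
qed

text \<open>The N ln N contributions cancel because the arguments of xlx above and below the fraction
  bar have the same sum 3/2 + 8c - 4z.\<close>
lemma h_fun_powr_eq:
  fixes N c z w :: real
  assumes "N > 0"
    and "1-2*c-2*z \<ge> 0" "1-2*c+4*z \<ge> 0" "6*c-3/2-9*z \<ge> 0" "6*c-3/2+3*z \<ge> 0"
    and "2*c+z-1/2 \<ge> 0" "1/2-c-z \<ge> 0" "1/2-c+2*z \<ge> 0" "2*c-3*z-1/2 \<ge> 0" "w \<ge> 0"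
    and "1-2*c-2*z-w \<ge> 0" "1-2*c+4*z-w \<ge> 0" "-7/2+10*c-5*z+w \<ge> 0"
  shows "xlx N * xlx (N*(1-2*c-2*z)) * xlx (N*(1-2*c+4*z)) * xlx (N*(6*c-3/2-9*z))
          * xlx (N*(6*c-3/2+3*z)) * xlx (N*(3/2))
        / (xlx (N*(2*c+z-1/2)) * xlx (N*(1/2-c-z)) * xlx (N*(1/2-c+2*z)) * xlx (N*(2*c-3*z-1/2))
          * xlx (N*w) * xlx (N*(1-2*c-2*z-w)) * xlx (N*(1-2*c+4*z-w)) * xlx (N*(-7/2+10*c-5*z+w))
          * xlx (N*3))
        * (3 powr (N*(2-4*c+2*z)) * 2 powr (N*(2*w)) * (1/1.618) powr (N*w) * 2 powr (N*(3/2))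
          / 2 powr (N*(1-2*c+z)))
      = h_fun (c,z,w) powr N"
proof -
  have "xlnx N = N * ln N" "xlnx (N*(3/2)) = N*(3/2)*ln N + N*(3/2 * (ln 3 - ln 2))"
    "xlnx (N*3) = N*3*ln N + N*(3 * ln 3)"
    using assms(1) by (simp_all add: xlnx_eq_mult_ln ln_mult ln_div algebra_simps)
  moreover note xlnx_scale[OF assms(1)] assms(2-)
  ultimately show ?thesis
    unfolding xlx_eq_exp_xlnx h_fun_eq_exp
    by (simp only:)
      (simp add: powr_def exp_add[symmetric] exp_diff[symmetric] algebra_simps del: exp_add exp_diff)
qed

section \<open>Stirling-type bounds\<close>

lemma pow_div_exp_le_fact: "real k ^ k / exp (real k) \<le> fact k"
proof -
  have s: "(\<lambda>n. real k ^ n / fact n) sums exp (real k)"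
    using exp_converges[of "real k"] by (simp add: divide_inverse_commute)
  have "real k ^ k / fact k \<le> exp (real k)"
    using sum_le_suminf[of "\<lambda>n. real k ^ n / fact n" "{k}"] s by (simp add: sums_iff)
  then show ?thesis by (simp add: divide_le_eq mult.commute)
qed

lemma ln_add_one_ge:
  fixes t :: real
  assumes "t \<ge> 0"
  shows "2 * t / (2 + t) \<le> ln (1 + t)"
proof -
  let ?f = "\<lambda>s::real. ln (1 + s) - 2 * s / (2 + s)"
  have "?f 0 \<le> ?f t"
  proof (rule DERIV_nonneg_imp_nondecreasing[OF assms])
    fix s :: real
    assume s: "0 \<le> s"
    have "DERIV ?f s :> 1 / (1 + s) - 4 / (2 + s)^2"
      using s by (auto intro!: derivative_eq_intros simp: power2_eq_square field_simps)
    moreover have "4 * (1 + s) \<le> (2 + s)^2"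
      by (simp add: power2_eq_square algebra_simps)
    then have "4 / (2 + s)^2 \<le> 1 / (1 + s)"
      using s by (simp add: field_simps)
    ultimately show "\<exists>y. DERIV ?f s :> y \<and> y \<ge> 0" by force
  qed
  then show ?thesis by simp
qed

text \<open>Equivalently e \<le> (1 + 1/k) powr (k + 1/2), the inductive step of the upper Stirling bound.\<close>
lemma exp_one_sqrt_pow_le:
  assumes "k \<ge> 1"
  shows "exp 1 * sqrt (real k) * real k ^ k \<le> sqrt (real k + 1) * (real k + 1) ^ k"
proof -
  define r where "r = real k"
  have r: "r > 0" using assms by (simp add: r_def)
  have r': "1 + 1/r > 0" using r by (simp add: add_pos_pos)
  have "1 = (r + 1/2) * (2 * (1/r) / (2 + 1/r))" using r by (simp add: field_simps)
  also have "\<dots> \<le> (r + 1/2) * ln (1 + 1/r)" using r by (intro mult_left_mono ln_add_one_ge) auto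
  finally have "exp 1 \<le> (1 + 1/r) powr (r + 1/2)" using r' by (simp add: powr_def)
  also have "\<dots> = (1 + 1/r) ^ k * sqrt (1 + 1/r)"
    using r' by (simp add: powr_add r_def powr_realpow powr_half_sqrt)
  finally have "exp 1 * (sqrt r * r ^ k) \<le> (1 + 1/r) ^ k * sqrt (1 + 1/r) * (sqrt r * r ^ k)"
    using r by (intro mult_right_mono) auto
  also have "\<dots> = ((1 + 1/r) * r) ^ k * sqrt ((1 + 1/r) * r)"
    using r by (simp add: power_mult_distrib real_sqrt_mult)
  also have "(1 + 1/r) * r = r + 1" using r by (simp add: field_simps)
  finally show ?thesis by (simp add: r_def ac_simps)
qed

lemma fact_mult_exp_le_sqrt:
  "k \<ge> 1 \<Longrightarrow> fact k * exp (real k) \<le> exp 1 * sqrt (real k) * real k ^ k"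
proof (induction k rule: nat_induct_at_least)
  case (Suc k)
  have "fact (Suc k) * exp (real (Suc k)) = (real k + 1) * exp 1 * (fact k * exp (real k))"
    by (simp add: exp_add algebra_simps)
  also have "\<dots> \<le> (real k + 1) * exp 1 * (exp 1 * sqrt (real k) * real k ^ k)"
    using Suc.IH by (intro mult_left_mono) simp_all
  also have "\<dots> \<le> (real k + 1) * exp 1 * (sqrt (real k + 1) * (real k + 1) ^ k)"
    using Suc.hyps by (intro mult_left_mono exp_one_sqrt_pow_le) simp_all
  also have "\<dots> = exp 1 * sqrt (real (Suc k)) * real (Suc k) ^ Suc k"
    by (simp add: algebra_simps)
  finally show ?case .
qed simp

lemma fact_mult_exp_le:
  "fact k * exp (real k) \<le> exp 1 * (sqrt (real k + 1) * real k ^ k)"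
proof (cases "k = 0")
  case False
  then have "fact k * exp (real k) \<le> exp 1 * sqrt (real k) * real k ^ k"
    by (intro fact_mult_exp_le_sqrt) simp
  also have "\<dots> \<le> exp 1 * (sqrt (real k + 1) * real k ^ k)"
    by (simp add: mult_left_mono mult_right_mono)
  finally show ?thesis .
qed simp

lemma prod_list_fact_ratio_le:
  assumes "sum_list ps = sum_list qs"
  shows "prod_list (map fact ps) / prod_list (map fact qs)
     \<le> exp 1 ^ length ps * prod_list (map (\<lambda>k. sqrt (real k + 1)) ps)
        * (prod_list (map (\<lambda>k. real k ^ k) ps) / prod_list (map (\<lambda>k. real k ^ k) qs))"
proof -
  define E where "E = exp (real (sum_list qs))"
  have upper: "prod_list (map fact ps) * E
      \<le> exp 1 ^ length ps * (prod_list (map (\<lambda>k. sqrt (real k + 1)) ps) * prod_list (map (\<lambda>k. real k ^ k) ps))"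
    unfolding E_def assms[symmetric]
  proof (induction ps)
    case (Cons p ps)
    have "prod_list (map fact (p # ps)) * exp (real (sum_list (p # ps)))
        = (fact p * exp (real p)) * (prod_list (map fact ps) * exp (real (sum_list ps)))"
      by (simp add: exp_add algebra_simps)
    also have "\<dots> \<le> (exp 1 * (sqrt (real p + 1) * real p ^ p)) * (exp 1 ^ length ps
        * (prod_list (map (\<lambda>k. sqrt (real k + 1)) ps) * prod_list (map (\<lambda>k. real k ^ k) ps)))"
      by (rule mult_mono[OF fact_mult_exp_le Cons.IH]) (auto intro!: mult_nonneg_nonneg prod_list_nonneg)
    finally show ?case by (simp add: algebra_simps)
  qed simp
  have lower: "prod_list (map (\<lambda>k. real k ^ k) qs) \<le> prod_list (map fact qs) * E"
    unfolding E_def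
  proof (induction qs)
    case (Cons p ps)
    have "real p ^ p \<le> fact p * exp (real p)"
      using pow_div_exp_le_fact[of p] by (simp add: divide_le_eq)
    then have "real p ^ p * prod_list (map (\<lambda>k. real k ^ k) ps)
        \<le> (fact p * exp (real p)) * (prod_list (map fact ps) * exp (real (sum_list ps)))"
      using Cons.IH by (intro mult_mono) (auto intro!: prod_list_nonneg)
    then show ?case by (simp add: exp_add algebra_simps)
  qed simp
  have E: "E > 0" by (simp add: E_def)
  have pos: "prod_list (map (\<lambda>k. real k ^ k) qs) > 0"
    by (induction qs) (auto intro!: mult_pos_pos)
  have "prod_list (map fact ps) / prod_list (map fact qs)
      = (prod_list (map fact ps) * E) / (prod_list (map fact qs) * E)"
    using E by simp
  also have "\<dots> \<le> exp 1 ^ length ps * (prod_list (map (\<lambda>k. sqrt (real k + 1)) ps)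
      * prod_list (map (\<lambda>k. real k ^ k) ps)) / prod_list (map (\<lambda>k. real k ^ k) qs)"
    using upper lower pos by (intro frac_le) (auto intro!: mult_nonneg_nonneg prod_list_nonneg)
  finally show ?thesis by simp
qed

lemma prod_list_le_power:
  fixes f :: "'a \<Rightarrow> real"
  assumes "\<And>k. k \<in> set ps \<Longrightarrow> 0 \<le> f k \<and> f k \<le> B"
  shows "prod_list (map f ps) \<le> B ^ length ps"
  using assms
proof (induction ps)
  case (Cons p ps)
  then have "0 \<le> f p" "f p \<le> B" "0 \<le> prod_list (map f ps)" "prod_list (map f ps) \<le> B ^ length ps"
    by (auto intro!: prod_list_nonneg)
  then show ?case by (simp add: mult_mono)
qed simp

section \<open>The summands of q\<close>

lemma fact_double: "fact (2 * k) = dfact (2 * k - 1) * 2 ^ k * fact k"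
proof (induction k)
  case (Suc k)
  have "dfact (2 * Suc k - 1) = (2 * k + 1) * dfact (2 * k - 1)"
    by (cases k) (simp_all add: numeral_2_eq_2)
  moreover have "fact (2 * Suc k) = (2 * k + 2) * (2 * k + 1) * (fact (2 * k) :: nat)"
    by (simp add: numeral_2_eq_2 algebra_simps)
  ultimately show ?case
    unfolding Suc.IH by (simp add: algebra_simps)
qed simp

lemma of_nat_dfact: "real (dfact (2 * k - 1)) = fact (2 * k) / (2 ^ k * fact k)"
proof -
  have "(fact (2 * k) :: real) = real (dfact (2 * k - 1) * 2 ^ k * fact k)"
    unfolding fact_double[symmetric] by simp
  then show ?thesis by (simp add: field_simps)
qed

definition q_summand :: "nat \<Rightarrow> nat \<Rightarrow> nat \<Rightarrow> nat \<Rightarrow> real" where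
  "q_summand x n i j = (let m = n div 2 in
     real (n choose (m - i)) * fact (m - i) * 3 ^ (n - 2*x - 2*i)
       / (fact (2*x + i - m) * 2 ^ (m - x - i) * fact (m - x - i))
     * (fact (m + i) * 3 ^ (n - 2*x + 4*i)
       / (fact (2*x - 3*i - m) * 2 ^ (m - x + 2*i) * fact (m - x + 2*i)))
     * (real ((n - 2*i - 2*x) choose j) * real ((n - 2*x + 4*i) choose j)
         * 2 ^ (2*j) * fact j * (1 / 1.618) ^ j
         * fact (3 * (2*x - m - 3*i)) * fact (3 * (2*x - m + i))
         / fact (3 * (2*x - m - 3*i) - 2 * (n - 2*i - 2*x) + j)))"

lemma q_eq_sum_q_summand:
  "q x n = (\<Sum>i = 0..n div 2 - x. \<Sum>j = 0..n - 2*i - 2*x. q_summand x n i j)"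
  unfolding q_def q_summand_def Let_def by (simp add: sum_distrib_left)

lemma q_summand_nonneg: "0 \<le> q_summand x n i j"
  unfolding q_summand_def Let_def by (intro mult_nonneg_nonneg divide_nonneg_nonneg) auto

locale q_index =
  fixes n m x i j :: nat
  assumes n_eq: "n = 2 * m" and m_pos: "0 < m"
    and x_gt: "0.454 * real n < real x" and x_le: "real x \<le> 0.45537 * real n"
    and i_le: "i \<le> m - x" and j_le: "j \<le> n - 2*i - 2*x"
begin

lemma index_bounds:
  "x + i \<le> m" "3*i + m \<le> 2*x" "2*(n - 2*i - 2*x) \<le> 3*(2*x - m - 3*i)" "j \<le> n - 2*i - 2*x"
proof -
  have "real (454 * n) < real (1000 * x)" "real (100000 * x) \<le> real (45537 * n)"
    using x_gt x_le by simp_all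
  then have "454 * n < 1000 * x" "100000 * x \<le> 45537 * n"
    by (simp_all only: of_nat_less_iff of_nat_le_iff)
  then show "x + i \<le> m" "3*i + m \<le> 2*x" "2*(n - 2*i - 2*x) \<le> 3*(2*x - m - 3*i)"
    "j \<le> n - 2*i - 2*x"
    using n_eq i_le j_le by auto
qed

definition num_args :: "nat list" where
  "num_args = [n, n - 2*i - 2*x, n - 2*x + 4*i, 3*(2*x - m - 3*i), 3*(2*x - m + i), 3*m]"

definition den_args :: "nat list" where
  "den_args = [2*x + i - m, m - x - i, m - x + 2*i, 2*x - 3*i - m, j, n - 2*i - 2*x - j,
     n - 2*x + 4*i - j, 3*(2*x - m - 3*i) - 2*(n - 2*i - 2*x) + j, 6*m]"

text \<open>The factor 2^(3m) and the arguments 3m, 6m come from (3n - 1)!! = (6m)! / (2^(3m) (3m)!).\<close>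
definition power_factor :: real where
  "power_factor = 3 ^ (n - 2*x - 2*i) * 3 ^ (n - 2*x + 4*i) * 2 ^ (2*j) * (1 / 1.618) ^ j * 2 ^ (3*m)
     / (2 ^ (m - x - i) * 2 ^ (m - x + 2*i))"

lemma sum_list_num_args: "sum_list num_args = sum_list den_args"
  using index_bounds n_eq unfolding num_args_def den_args_def by simp

lemma q_summand_div_dfact_eq:
  "q_summand x n i j / real (dfact (3 * n - 1))
     = prod_list (map fact num_args) / prod_list (map fact den_args) * power_factor"
proof -
  have "3 * n - 1 = 2 * (3 * m) - 1" "2 * (3 * m) = 6 * m" "n div 2 = m" "n - (m - i) = m + i"
    "m - i \<le> n"
    using n_eq index_bounds by auto
  then show ?thesis
    using index_bounds
    unfolding q_summand_def Let_def num_args_def den_args_def power_factor_def \<open>3 * n - 1 = _\<close>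
      of_nat_dfact
    by (simp add: binomial_fact field_simps)
qed

lemma grid_point_in_Omega: "(real x / real n, real i / real n, real j / real n) \<in> Omega"
proof -
  have "x + i \<le> m" "2 * i + 2 * x + j \<le> n"
    using index_bounds n_eq by auto
  then have "real x + real i \<le> real m" "2 * real i + 2 * real x + real j \<le> real n"
    by linarith+
  then show ?thesis
    using n_eq m_pos x_gt x_le unfolding Omega_def by (simp add: field_simps)
qed

lemma pow_ratio_eq_h_power:
  "prod_list (map (\<lambda>k. real k ^ k) num_args) / prod_list (map (\<lambda>k. real k ^ k) den_args)
     * power_factor = h_fun (real x / real n, real i / real n, real j / real n) ^ n"
proof -
  define N c z w where "N = real n" and "c = real x / N" and "z = real i / N" and "w = real j / N"
  have N: "N > 0" using n_eq m_pos by (simp add: N_def)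
  have args:
    "N * (1-2*c-2*z) = real (n - 2*i - 2*x)" "N * (1-2*c+4*z) = real (n - 2*x + 4*i)"
    "N * (6*c-3/2-9*z) = real (3*(2*x - m - 3*i))" "N * (6*c-3/2+3*z) = real (3*(2*x - m + i))"
    "N * (2*c+z-1/2) = real (2*x + i - m)" "N * (1/2-c-z) = real (m - x - i)"
    "N * (1/2-c+2*z) = real (m - x + 2*i)" "N * (2*c-3*z-1/2) = real (2*x - 3*i - m)"
    "N * w = real j" "N * (1-2*c-2*z-w) = real (n - 2*i - 2*x - j)"
    "N * (1-2*c+4*z-w) = real (n - 2*x + 4*i - j)"
    "N * (-7/2+10*c-5*z+w) = real (3*(2*x - m - 3*i) - 2*(n - 2*i - 2*x) + j)"
    "N * (3/2) = real (3*m)" "N * 3 = real (6*m)"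
    "N * (2-4*c+2*z) = real ((n - 2*x - 2*i) + (n - 2*x + 4*i))" "N * (2*w) = real (2*j)"
    "N * (1-2*c+z) = real ((m - x - i) + (m - x + 2*i))"
    using index_bounds N unfolding N_def c_def z_def w_def n_eq
    by (simp_all add: field_simps of_nat_diff)
  have nonneg: "0 \<le> t" if "N * t = real k" for t k
    using that N by (metis of_nat_0_le_iff zero_le_mult_iff not_less)
  have powr_nat: "(3::real) powr real k = 3 ^ k" "(2::real) powr real k = 2 ^ k"
    "(1/1.618::real) powr real k = (1/1.618) ^ k" "h_fun p powr real k = h_fun p ^ k" for k p
    by (simp_all add: powr_realpow h_fun_pos)
  have "(real x / real n, real i / real n, real j / real n) = (c, z, w)"
    by (simp add: c_def z_def w_def N_def)
  moreover note h_fun_powr_eq[OF N nonneg[OF args(1)] nonneg[OF args(2)] nonneg[OF args(3)]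
    nonneg[OF args(4)] nonneg[OF args(5)] nonneg[OF args(6)] nonneg[OF args(7)] nonneg[OF args(8)]
    nonneg[OF args(9)] nonneg[OF args(10)] nonneg[OF args(11)] nonneg[OF args(12)]]
  ultimately show ?thesis
    unfolding args unfolding N_def xlx_of_nat powr_nat num_args_def den_args_def power_factor_def
    by (simp add: power_add)
qed

lemma length_num_args: "length num_args = 6"
  by (simp add: num_args_def)

lemma sqrt_factor_le: "prod_list (map (\<lambda>k. sqrt (real k + 1)) num_args) \<le> (7 * real n) ^ 3"
proof -
  have "prod_list (map (\<lambda>k. sqrt (real k + 1)) num_args) \<le> sqrt (7 * real n) ^ length num_args"
  proof (rule prod_list_le_power)
    fix k
    assume "k \<in> set num_args"
    then have "k \<le> 6 * n" unfolding num_args_def using index_bounds n_eq by auto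
    then have "real k + 1 \<le> 7 * real n" using m_pos n_eq by linarith
    then show "0 \<le> sqrt (real k + 1) \<and> sqrt (real k + 1) \<le> sqrt (7 * real n)" by simp
  qed
  also have "\<dots> = (sqrt (7 * real n) ^ 2) ^ 3"
    unfolding length_num_args power_mult[symmetric] by simp
  also have "\<dots> = (7 * real n) ^ 3"
    by simp
  finally show ?thesis .
qed

lemma q_summand_le:
  "q_summand x n i j / real (dfact (3 * n - 1))
     \<le> exp 1 ^ 6 * (7 * real n) ^ 3 * h_fun (real x / real n, real i / real n, real j / real n) ^ n"
proof -
  have "q_summand x n i j / real (dfact (3 * n - 1))
      \<le> exp 1 ^ 6 * prod_list (map (\<lambda>k. sqrt (real k + 1)) num_args)
        * (prod_list (map (\<lambda>k. real k ^ k) num_args) / prod_list (map (\<lambda>k. real k ^ k) den_args))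
        * power_factor"
    unfolding q_summand_div_dfact_eq
    using prod_list_fact_ratio_le[OF sum_list_num_args, unfolded length_num_args]
    by (rule mult_right_mono) (simp add: power_factor_def)
  also have "\<dots> = exp 1 ^ 6 * prod_list (map (\<lambda>k. sqrt (real k + 1)) num_args)
        * h_fun (real x / real n, real i / real n, real j / real n) ^ n"
    by (simp only: mult.assoc pow_ratio_eq_h_power)
  also have "\<dots> \<le> exp 1 ^ 6 * (7 * real n) ^ 3 * h_fun (real x / real n, real i / real n, real j / real n) ^ n"
    using sqrt_factor_le h_fun_pos[of "(real x / real n, real i / real n, real j / real n)"]
    by (intro mult_right_mono mult_left_mono) auto
  finally show ?thesis .
qed

lemma q_summand_le_SUP:
  "q_summand x n i j / real (dfact (3 * n - 1))
     \<le> exp 1 ^ 6 * (7 * real n) ^ 3 * (SUP p\<in>Omega. h_fun p ^ n)"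
proof -
  have "h_fun (real x / real n, real i / real n, real j / real n) ^ n \<le> (SUP p\<in>Omega. h_fun p ^ n)"
    by (rule cSUP_upper[OF grid_point_in_Omega bdd_above_h_fun_power])
  with q_summand_le show ?thesis
    by (elim order_trans) (simp add: mult_left_mono)
qed

end

lemma double_sum_le:
  fixes T :: "nat \<Rightarrow> nat \<Rightarrow> real"
  assumes "\<And>i j. i \<le> I \<Longrightarrow> j \<le> J i \<Longrightarrow> T i j \<le> D" and "\<And>i. J i \<le> K" and "0 \<le> D"
  shows "(\<Sum>i = 0..I. \<Sum>j = 0..J i. T i j) \<le> real (I + 1) * (real (K + 1) * D)"
proof -
  have "(\<Sum>j = 0..J i. T i j) \<le> real (K + 1) * D" if "i \<le> I" for i
  proof -
    have "(\<Sum>j = 0..J i. T i j) \<le> real (card {0..J i}) * D"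
      using assms(1) that by (intro sum_bounded_above) auto
    also have "\<dots> \<le> real (K + 1) * D"
      using assms(2,3) by (intro mult_right_mono) (auto simp: le_Suc_eq)
    finally show ?thesis .
  qed
  then have "(\<Sum>i = 0..I. \<Sum>j = 0..J i. T i j) \<le> (\<Sum>i = 0..I. real (K + 1) * D)"
    by (intro sum_mono) auto
  then show ?thesis by simp
qed

theorem lemma11:
  shows "\<exists>C N. \<forall>n x. n \<ge> N \<and> n > 0 \<and> even n \<and> 0.454 * real n < real x \<and> real x \<le> 0.45537 * real n
     \<longrightarrow> \<bar>q x n / real (dfact (3 * n - 1))\<bar>
           \<le> C * real n ^ 6 * (SUP p\<in>Omega. h_fun p ^ n)"
proof (intro exI[of _ "1372 * exp 1 ^ 6"] exI[of _ 1] allI impI)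
  fix n x :: nat
  assume hyp: "1 \<le> n \<and> n > 0 \<and> even n \<and> 0.454 * real n < real x \<and> real x \<le> 0.45537 * real n"
  then obtain m where n: "n = 2 * m" "0 < m" "n div 2 = m" by (auto elim: evenE)
  define S where "S = (SUP p\<in>Omega. h_fun p ^ n)"
  define D where "D = exp 1 ^ 6 * (7 * real n) ^ 3 * S"
  have D: "0 \<le> D"
    unfolding D_def S_def using SUP_h_fun_power_nonneg by simp
  have "q x n / real (dfact (3 * n - 1)) \<le> real (m - x + 1) * (real (n + 1) * D)"
    unfolding q_eq_sum_q_summand sum_divide_distrib \<open>n div 2 = m\<close>
    using q_index.q_summand_le_SUP[of n m x] hyp n D
    by (intro double_sum_le) (auto simp: q_index_def D_def S_def)
  also have "\<dots> \<le> (2 * real n) * (2 * real n * D)"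
    using n D by (intro mult_mono) auto
  also have "\<dots> = 1372 * exp 1 ^ 6 * real n ^ 5 * S"
    by (simp add: D_def power_mult_distrib numeral_eq_Suc algebra_simps)
  also have "\<dots> \<le> 1372 * exp 1 ^ 6 * real n ^ 6 * S"
    using n SUP_h_fun_power_nonneg unfolding S_def
    by (intro mult_right_mono mult_left_mono power_increasing) auto
  finally show "\<bar>q x n / real (dfact (3 * n - 1))\<bar> \<le> 1372 * exp 1 ^ 6 * real n ^ 6 * S"
    using q_summand_nonneg by (simp add: q_eq_sum_q_summand sum_nonneg)
qed

end
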